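(* Consider unbounded homogeneous systems with error specifications, and for $k\in\mathbb{N}_{>0}$ the Horn constraints (H0)–(H4) described in the context. (1) If, for a given system and error specification, the constraints (H0)–(H4) are solvable for some $k$, then they are also solvable for every $k'>k$ (for the same system and error specification). (2) If $k'>k>0$, then there exist a system and error specification for which the constraints (H0)–(H4) are solvable for $k'$ but not solvable for $k$.
   Context: An unbounded homogeneous system consists of a non-empty global state space $G$, the process index set $P=\mathbb{N}$, a non-empty local state space $L$ (the same for all processes), a set of initial states $\mathit{Init}\subseteq G\times L$ (the same for all processes), and, for each process id $p\in\mathbb{N}$, a transition relation $(g,l)\stackrel{p}{\to}(g',l')$ on $G\times L$ (the behaviour may depend on the id $p$). System states are pairs $(g,\bar l)$ with $\bar l\in L^{\mathbb{N}}$; initial states are those with $(g,\bar l[p])\in\mathit{Init}$ for all $p$; the system transitions are $(g,\bar l)\to(g',\bar l[p/l'])$ whenever $(g,\bar l[p])\stackrel{p}{\to}(g',l')$, where $\bar l[p/l']$ replaces component $p$ by $l'$. An error specification is $(\langle p_1,E_1\rangle,\dots,\langle p_m,E_m\rangle)$ with pairwise distinct $p_j\in\mathbb{N}$ and $E_j\subseteq G\times L$; error states are $(g,\bar l)$ with $(g,\bar l[p_j])\in E_j$ for all $j$. For $k\ge 1$, the constraints are on a single relation $R\subseteq G\times(\mathbb{N}\times L)^k$; $\mathit{dist}(x_1,\dots,x_r)$ means the $x_i$ are pairwise distinct; for indices $a\le b$, $\mathit{RConj}(a,\dots,b)$ denotes $\bigwedge_{i_1<\dots<i_k,\ i_j\in\{a,\dots,b\}}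 R(g,q_{i_1},l_{i_1},\dots,q_{i_k},l_{i_k})$. All variables $g,g',q_i\in\mathbb{N},l_i,l_i'\in L$ are universally quantified: (H0) for every permutation $\sigma$ of $\{1,\dots,k\}$: $\mathit{dist}(q_1,\dots,q_k)\wedge R(g,q_1,l_1,\dots,q_k,l_k)\Rightarrow R(g,q_{\sigma(1)},l_{\sigma(1)},\dots,q_{\sigma(k)},l_{\sigma(k)})$; (H1) $\mathit{dist}(q_1,\dots,q_k)\wedge\mathit{Init}(g,l_1)\wedge\dots\wedge\mathit{Init}(g,l_k)\Rightarrow R(g,q_1,l_1,\dots,q_k,l_k)$; (H2) $\mathit{dist}(q_1,\dots,q_k)\wedge (g,l_1)\stackrel{q_1}{\to}(g',l_1')\wedge R(g,q_1,l_1,\dots,q_k,l_k)\Rightarrow R(g',q_1,l_1',q_2,l_2,\dots,q_k,l_k)$; (H3) $\mathit{dist}(q_0,q_1,\dots,q_k)\wedge (g,l_0)\stackrel{q_0}{\to}(g',l_0')\wedge\mathit{RConj}(0,\dots,k)\Rightarrow R(g',q_1,l_1,\dots,q_k,l_k)$; (H4) with $r=\max\{m,k\}$: $\mathit{dist}(q_1,\dots,q_r)\wedge\bigwedge_{j=1}^m\big(q_j=p_j\wedge(g,l_j)\in E_j\big)\wedge\mathit{RConj}(1,\dots,r)\Rightarrow\mathit{false}$. The constraints are solvable for $k$ if some relation $R$ makes all of (H0)–(H4) true. *)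

theory Defs
  imports "HOL-Combinatorics.Permutations"
begin

(* A candidate relation R is a predicate on G \<times> (nat \<times> L) list, only its
   values on lists of length k matter. Tuples (q_1,l_1,...,q_k,l_k) are given
   by functions q, l indexed from a to b. *)

definition tup :: "(nat \<Rightarrow> nat) \<Rightarrow> (nat \<Rightarrow> 'l) \<Rightarrow> nat \<Rightarrow> nat \<Rightarrow> (nat \<times> 'l) list" where
  "tup q l a b = map (\<lambda>i. (q i, l i)) [a..<Suc b]"

definition RConj :: "nat \<Rightarrow> ('g \<Rightarrow> (nat \<times> 'l) list \<Rightarrow> bool) \<Rightarrow> 'g \<Rightarrow>
    (nat \<Rightarrow> nat) \<Rightarrow> (nat \<Rightarrow> 'l) \<Rightarrow> nat \<Rightarrow> nat \<Rightarrow> bool" where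
  "RConj k R g q l a b \<longleftrightarrow>
     (\<forall>idx :: nat \<Rightarrow> nat.
        (\<forall>i j. 1 \<le> i \<longrightarrow> i < j \<longrightarrow> j \<le> k \<longrightarrow> idx i < idx j) \<and>
        (\<forall>i\<in>{1..k}. idx i \<in> {a..b})
        \<longrightarrow> R g (map (\<lambda>j. (q (idx j), l (idx j))) [1..<Suc k]))"

definition error_spec :: "(nat \<times> ('g \<times> 'l) set) list \<Rightarrow> bool" where
  "error_spec errs \<longleftrightarrow> distinct (map fst errs)"

definition H0 :: "nat \<Rightarrow> ('g \<Rightarrow> (nat \<times> 'l) list \<Rightarrow> bool) \<Rightarrow> bool" where
  "H0 k R \<longleftrightarrow> (\<forall>\<sigma> g q l. \<sigma> permutes {1..k} \<longrightarrow> inj_on q {1..k} \<longrightarrow> R g (tup q l 1 k)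
      \<longrightarrow> R g (tup (q \<circ> \<sigma>) (l \<circ> \<sigma>) 1 k))"

definition H1 :: "('g \<times> 'l) set \<Rightarrow> nat \<Rightarrow> ('g \<Rightarrow> (nat \<times> 'l) list \<Rightarrow> bool) \<Rightarrow> bool" where
  "H1 Init k R \<longleftrightarrow> (\<forall>g q l. inj_on q {1..k} \<longrightarrow> (\<forall>i\<in>{1..k}. (g, l i) \<in> Init)
      \<longrightarrow> R g (tup q l 1 k))"

definition H2 :: "(nat \<Rightarrow> (('g \<times> 'l) \<times> ('g \<times> 'l)) set) \<Rightarrow> nat \<Rightarrow>
    ('g \<Rightarrow> (nat \<times> 'l) list \<Rightarrow> bool) \<Rightarrow> bool" where
  "H2 Trans k R \<longleftrightarrow> (\<forall>g g' q l l1'. inj_on q {1..k} \<longrightarrow>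
      ((g, l 1), (g', l1')) \<in> Trans (q 1) \<longrightarrow> R g (tup q l 1 k)
      \<longrightarrow> R g' (tup q (l(1 := l1')) 1 k))"

definition H3 :: "(nat \<Rightarrow> (('g \<times> 'l) \<times> ('g \<times> 'l)) set) \<Rightarrow> nat \<Rightarrow>
    ('g \<Rightarrow> (nat \<times> 'l) list \<Rightarrow> bool) \<Rightarrow> bool" where
  "H3 Trans k R \<longleftrightarrow> (\<forall>g g' q l l0'. inj_on q {0..k} \<longrightarrow>
      ((g, l 0), (g', l0')) \<in> Trans (q 0) \<longrightarrow> RConj k R g q l 0 k
      \<longrightarrow> R g' (tup q l 1 k))"

definition H4 :: "(nat \<times> ('g \<times> 'l) set) list \<Rightarrow> nat \<Rightarrow>
    ('g \<Rightarrow> (nat \<times> 'l) list \<Rightarrow> bool) \<Rightarrow> bool" where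
  "H4 errs k R \<longleftrightarrow> (let m = length errs; r = max m k in
     (\<forall>g q l. inj_on q {1..r} \<longrightarrow>
        (\<forall>j\<in>{1..m}. q j = fst (errs ! (j - 1)) \<and> (g, l j) \<in> snd (errs ! (j - 1)))
        \<longrightarrow> RConj k R g q l 1 r \<longrightarrow> False))"

definition solvable :: "('g \<times> 'l) set \<Rightarrow> (nat \<Rightarrow> (('g \<times> 'l) \<times> ('g \<times> 'l)) set) \<Rightarrow>
    (nat \<times> ('g \<times> 'l) set) list \<Rightarrow> nat \<Rightarrow> bool" where
  "solvable Init Trans errs k \<longleftrightarrow>
     (\<exists>R. H0 k R \<and> H1 Init k R \<and> H2 Trans k R \<and> H3 Trans k R \<and> H4 errs k R)"

end

theory Submission
  imports Defs
begin

text \<open>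
  (1) A solution \<open>R\<close> for \<open>k\<close> lifts to any \<open>k' \<ge> k\<close>: let a \<open>k'\<close>-tuple satisfy the new
  relation when \<open>R\<close> holds of each of its \<open>k\<close>-subtuples with distinct process ids. A step
  of a process of the tuple is reproduced in each subtuple by (H2) if the subtuple contains
  that process (moved to the front by (H0)), and by (H3) if it does not; (H3) and (H4)
  reduce to the same constraints for \<open>R\<close>, since every \<open>k\<close>-subset of positions extends to
  a \<open>k'\<close>-subset.

  (2) Let processes \<open>0, \<dots>, k\<close> each fire once, moving from local state 1 to 2 and
  incrementing a global counter that starts at 0, and let the error be counter 1 with all of
  \<open>0, \<dots>, k\<close> still in state 1. For \<open>k' > k\<close> the invariant ``counter plus number of
  processes \<open>\<le> k\<close> in state 1 is at most \<open>k + 1\<close>'' is a solution. For \<open>k\<close> itself, (H1) and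
  (H3) force every \<open>k\<close> processes in state 1 with counter 1 into \<open>R\<close>, because one of the
  remaining processes among \<open>0, \<dots>, k\<close> may have fired, so (H4) fails.
\<close>

lemma length_tup [simp]: "length (tup q l a b) = Suc b - a"
  by (simp add: tup_def del: upt_Suc)

lemma tup_nth: "i < Suc b - a \<Longrightarrow> tup q l a b ! i = (q (a + i), l (a + i))"
  by (simp add: tup_def del: upt_Suc)

lemma set_tup: "set (tup q l a b) = (\<lambda>i. (q i, l i)) ` {a..b}"
  by (auto simp: tup_def)

lemma fst_set_tup: "fst ` set (tup q l a b) = q ` {a..b}"
  by (force simp: set_tup)

lemma tup_cong:
  "(\<And>i. i \<in> {a..b} \<Longrightarrow> q i = q' i) \<Longrightarrow> (\<And>i. i \<in> {a..b} \<Longrightarrow> l i = l' i)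
    \<Longrightarrow> tup q l a b = tup q' l' a b"
  unfolding tup_def by (rule map_cong) auto

lemma tup_Cons: "a \<le> b \<Longrightarrow> tup q l a b = (q a, l a) # tup q l (Suc a) b"
  by (simp add: tup_def upt_conv_Cons del: upt_Suc)

lemma tup_of_list:
  "length xs = Suc b - a \<Longrightarrow> tup (\<lambda>j. fst (xs ! (j - a))) (\<lambda>j. snd (xs ! (j - a))) a b = xs"
  by (rule nth_equalityI) (auto simp: tup_nth)

lemma inj_on_fst_nth:
  assumes "distinct (map fst xs)" "length xs = Suc b - a"
  shows "inj_on (\<lambda>j. fst (xs ! (j - a))) {a..b}"
proof (rule inj_onI)
  fix i j assume ij: "i \<in> {a..b}" "j \<in> {a..b}" and eq: "fst (xs ! (i - a)) = fst (xs ! (j - a))"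
  then have "i - a < length xs" "j - a < length xs"
    using assms(2) by auto
  then have "i - a = j - a"
    using nth_eq_iff_index_eq[OF assms(1)] eq by simp
  then show "i = j"
    using ij by auto
qed

lemma inj_on_exists_gt:
  assumes "inj_on q A" "Suc k < card A"
  shows "\<exists>j\<in>A. k < q j"
proof (rule ccontr)
  assume "\<not> ?thesis"
  then have "q ` A \<subseteq> {..k}"
    by auto
  then have "card (q ` A) \<le> Suc k"
    using card_mono[of "{..k}"] by fastforce
  then show False
    using assms by (simp add: card_image)
qed

lemma head_notin_fst_set_tup:
  assumes "inj_on q {a..b}"
  shows "q a \<notin> fst ` set (tup q l (Suc a) b)"
proof
  assume "q a \<in> fst ` set (tup q l (Suc a) b)"
  then obtain i where "i \<in> {Suc a..b}" "q i = q a"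
    by (auto simp: fst_set_tup)
  then show False
    using inj_onD[OF assms, of i a] by auto
qed

lemma set_tup_permutes:
  assumes "\<sigma> permutes {a..b}"
  shows "set (tup (q \<circ> \<sigma>) (l \<circ> \<sigma>) a b) = set (tup q l a b)"
proof -
  have "set (tup (q \<circ> \<sigma>) (l \<circ> \<sigma>) a b) = (\<lambda>i. (q i, l i)) ` \<sigma> ` {a..b}"
    by (simp add: set_tup image_image)
  then show ?thesis
    by (simp add: permutes_image[OF assms] set_tup)
qed

lemma H0_if_set_determined:
  assumes "\<And>g xs ys. R g xs \<Longrightarrow> set ys = set xs \<Longrightarrow> R g ys"
  shows "H0 k R"
  unfolding H0_def using assms set_tup_permutes by metis

lemma RConj_sorted_list_of_set:
  assumes "RConj k R g q l a b" "T \<subseteq> {a..b}" "card T = k"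
  shows "R g (map (\<lambda>i. (q i, l i)) (sorted_list_of_set T))"
proof -
  define sl where "sl = sorted_list_of_set T"
  have "finite T" using assms(2) finite_subset by blast
  then have len: "length sl = k" and st: "set sl = T"
    using assms(3) by (simp_all add: sl_def)
  have sorted: "sorted_wrt (<) sl"
    unfolding sl_def by (rule strict_sorted_list_of_set)
  define idx where "idx j = sl ! (j - 1)" for j
  have "\<forall>i j. 1 \<le> i \<longrightarrow> i < j \<longrightarrow> j \<le> k \<longrightarrow> idx i < idx j"
    unfolding idx_def using sorted_wrt_nth_less[OF sorted] len by auto
  moreover have "\<forall>i\<in>{1..k}. idx i \<in> {a..b}"
  proof
    fix i assume "i \<in> {1..k}"
    then have "sl ! (i - 1) \<in> set sl" using len by auto
    then show "idx i \<in> {a..b}" unfolding idx_def using st assms(2) by blast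
  qed
  ultimately have "R g (map (\<lambda>j. (q (idx j), l (idx j))) [1..<Suc k])"
    using assms(1) unfolding RConj_def by blast
  moreover have "map (\<lambda>j. (q (idx j), l (idx j))) [1..<Suc k] = map (\<lambda>i. (q i, l i)) sl"
    by (rule nth_equalityI) (auto simp: len idx_def simp del: upt_Suc)
  ultimately show ?thesis by (simp add: sl_def)
qed

definition all_subtuples ::
    "nat \<Rightarrow> ('g \<Rightarrow> (nat \<times> 'l) list \<Rightarrow> bool) \<Rightarrow> 'g \<Rightarrow> (nat \<times> 'l) list \<Rightarrow> bool" where
  "all_subtuples k R g xs \<longleftrightarrow>
     (\<forall>ys. set ys \<subseteq> set xs \<longrightarrow> distinct (map fst ys) \<longrightarrow> length ys = k \<longrightarrow> R g ys)"

lemma all_subtuples_subset: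
  "all_subtuples k R g xs \<Longrightarrow> set ys \<subseteq> set xs \<Longrightarrow> all_subtuples k R g ys"
  unfolding all_subtuples_def by blast

lemma RConj_if_all_subtuples:
  assumes inj: "inj_on q {a..b}" and all: "all_subtuples k R g (tup q l a b)"
  shows "RConj k R g q l a b"
  unfolding RConj_def
proof (intro allI impI, elim conjE)
  fix idx :: "nat \<Rightarrow> nat"
  assume "\<forall>i j. 1 \<le> i \<longrightarrow> i < j \<longrightarrow> j \<le> k \<longrightarrow> idx i < idx j"
    and rng: "\<forall>i\<in>{1..k}. idx i \<in> {a..b}"
  then have "strict_mono_on {1..k} idx"
    by (auto simp: strict_mono_on_def)
  then have "inj_on (q \<circ> idx) {1..k}"
    using comp_inj_on[OF strict_mono_on_imp_inj_on inj_on_subset[OF inj]] rng by blast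
  then have "distinct (map fst (map (\<lambda>j. (q (idx j), l (idx j))) [1..<Suc k]))"
    by (simp add: distinct_map o_def atLeastLessThanSuc_atLeastAtMost del: upt_Suc)
  moreover have "set (map (\<lambda>j. (q (idx j), l (idx j))) [1..<Suc k]) \<subseteq> set (tup q l a b)"
    using rng by (auto simp: set_tup)
  ultimately show "R g (map (\<lambda>j. (q (idx j), l (idx j))) [1..<Suc k])"
    using all unfolding all_subtuples_def by simp
qed

lemma all_subtuples_if_RConj:
  assumes "RConj k' (all_subtuples k R) g q l a b" "k \<le> k'" "k' \<le> Suc b - a"
  shows "all_subtuples k R g (tup q l a b)"
  unfolding all_subtuples_def
proof (intro allI impI)
  let ?f = "\<lambda>i. (q i, l i)"
  fix zs assume zs: "set zs \<subseteq> set (tup q l a b)" "distinct (map fst zs)" "length zs = k"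
  obtain U where U: "U \<subseteq> {a..b}" "inj_on ?f U" "set zs = ?f ` U"
    using zs(1) subset_image_inj unfolding set_tup by meson
  have "card U = k"
    using card_image[OF U(2)] U(3) distinct_card zs(2,3) by (metis distinct_map)
  then obtain T where T: "U \<subseteq> T" "T \<subseteq> {a..b}" "card T = k'"
    using exists_subset_between[of U k' "{a..b}"] assms(2,3) U(1) by auto
  then have "all_subtuples k R g (map ?f (sorted_list_of_set T))"
    using RConj_sorted_list_of_set[OF assms(1)] by blast
  moreover have "set zs \<subseteq> set (map ?f (sorted_list_of_set T))"
    using T U(3) finite_subset[OF T(2)] by auto
  ultimately show "R g zs"
    using zs(2,3) unfolding all_subtuples_def by blast
qed

lemma H0_mset_eq:
  assumes "H0 k R" "length ys = k" "distinct (map fst ys)" "mset ys' = mset ys" "R g ys"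
  shows "R g ys'"
proof -
  obtain f where f: "f permutes {..<k}" "permute_list f ys = ys'"
    using mset_eq_permutation[OF assms(4)] unfolding assms(2) by blast
  define \<sigma> where "\<sigma> i = (if i \<in> {1..k} then Suc (f (i - 1)) else i)" for i
  have "inj_on \<sigma> {1..k}"
  proof (rule inj_onI)
    fix x y assume "x \<in> {1..k}" "y \<in> {1..k}" "\<sigma> x = \<sigma> y"
    then have "f (x - 1) = f (y - 1)"
      by (simp add: \<sigma>_def)
    then have "x - 1 = y - 1"
      using permutes_inj[OF f(1)] by (simp add: inj_eq)
    then show "x = y"
      using \<open>x \<in> {1..k}\<close> \<open>y \<in> {1..k}\<close> by auto
  qed
  moreover have "\<sigma> ` {1..k} \<subseteq> {1..k}"
  proof
    fix y assume "y \<in> \<sigma> ` {1..k}"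
    then obtain x where x: "x \<in> {1..k}" "y = \<sigma> x" by blast
    then have "f (x - 1) \<in> {..<k}"
      unfolding permutes_in_image[OF f(1)] by auto
    then show "y \<in> {1..k}"
      using x by (simp add: \<sigma>_def)
  qed
  ultimately have "bij_betw \<sigma> {1..k} {1..k}"
    by (simp add: bij_betw_def card_image card_subset_eq)
  then have perm: "\<sigma> permutes {1..k}"
    by (rule bij_imp_permutes) (auto simp: \<sigma>_def)
  let ?q = "\<lambda>j. fst (ys ! (j - 1))" and ?l = "\<lambda>j. snd (ys ! (j - 1))"
  have "R g (tup (?q \<circ> \<sigma>) (?l \<circ> \<sigma>) 1 k)"
  proof (rule assms(1)[unfolded H0_def, rule_format, OF perm])
    show "inj_on ?q {1..k}"
      using inj_on_fst_nth[OF assms(3)] assms(2) by simp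
    show "R g (tup ?q ?l 1 k)"
      using tup_of_list[of ys k 1] assms(2,5) by simp
  qed
  moreover have "tup (?q \<circ> \<sigma>) (?l \<circ> \<sigma>) 1 k = ys'"
  proof (rule nth_equalityI)
    show "length (tup (?q \<circ> \<sigma>) (?l \<circ> \<sigma>) 1 k) = length ys'"
      using f(2) assms(2) by auto
    fix i assume "i < length (tup (?q \<circ> \<sigma>) (?l \<circ> \<sigma>) 1 k)"
    then show "tup (?q \<circ> \<sigma>) (?l \<circ> \<sigma>) 1 k ! i = ys' ! i"
      using permute_list_nth[of f ys i] f assms(2) by (simp add: tup_nth \<sigma>_def)
  qed
  ultimately show ?thesis by simp
qed

lemma H1_list:
  assumes "H1 Init k R" "length ys = k" "distinct (map fst ys)" "\<forall>x\<in>set ys. (g, snd x) \<in> Init"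
  shows "R g ys"
proof -
  let ?q = "\<lambda>j. fst (ys ! (j - 1))" and ?l = "\<lambda>j. snd (ys ! (j - 1))"
  have "R g (tup ?q ?l 1 k)"
  proof (rule assms(1)[unfolded H1_def, rule_format])
    show "inj_on ?q {1..k}"
      using inj_on_fst_nth[OF assms(3)] assms(2) by simp
    show "(g, ?l i) \<in> Init" if "i \<in> {1..k}" for i
      using that assms(2,4) by auto
  qed
  then show ?thesis
    using tup_of_list[of ys k 1] assms(2) by simp
qed

lemma H2_list:
  assumes "H2 Trans k R" "Suc (length xs) = k" "distinct (p # map fst xs)"
    "((g, l), (g', l')) \<in> Trans p" "R g ((p, l) # xs)"
  shows "R g' ((p, l') # xs)"
proof -
  let ?xs = "(p, l) # xs" and ?xs' = "(p, l') # xs"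
  let ?q = "\<lambda>j. fst (?xs ! (j - 1))" and ?l = "\<lambda>j. snd (?xs ! (j - 1))"
  have "R g' (tup ?q (?l(1 := l')) 1 k)"
  proof (rule assms(1)[unfolded H2_def, rule_format])
    show "inj_on ?q {1..k}"
      using inj_on_fst_nth[of ?xs k 1] assms(2,3) by simp
    show "((g, ?l 1), (g', l')) \<in> Trans (?q 1)"
      using assms(4) by simp
    show "R g (tup ?q ?l 1 k)"
      using tup_of_list[of ?xs k 1] assms(2,5) by simp
  qed
  moreover have "tup ?q (?l(1 := l')) 1 k = tup (\<lambda>j. fst (?xs' ! (j - 1))) (\<lambda>j. snd (?xs' ! (j - 1))) 1 k"
    by (rule tup_cong) (auto simp: nth_Cons')
  ultimately show ?thesis
    using tup_of_list[of ?xs' k 1] assms(2) by simp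
qed

lemma H3_list:
  assumes "H3 Trans k R" "length xs = k" "distinct (p # map fst xs)"
    "((g, l), (g', l')) \<in> Trans p" "all_subtuples k R g ((p, l) # xs)"
  shows "R g' xs"
proof -
  let ?xs = "(p, l) # xs"
  let ?q = "\<lambda>j. fst (?xs ! j)" and ?l = "\<lambda>j. snd (?xs ! j)"
  have inj: "inj_on ?q {0..k}"
    using inj_on_fst_nth[of ?xs k 0] assms(2,3) by simp
  have "R g' (tup ?q ?l 1 k)"
  proof (rule assms(1)[unfolded H3_def, rule_format, OF inj])
    show "((g, ?l 0), (g', l')) \<in> Trans (?q 0)"
      using assms(4) by simp
    show "RConj k R g ?q ?l 0 k"
      using RConj_if_all_subtuples[OF inj, of k R g ?l] tup_of_list[of ?xs k 0] assms(2,5) by simp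
  qed
  moreover have "tup ?q ?l 1 k = tup (\<lambda>j. fst (xs ! (j - 1))) (\<lambda>j. snd (xs ! (j - 1))) 1 k"
    by (rule tup_cong) (auto simp: nth_Cons')
  ultimately show ?thesis
    using tup_of_list[of xs k 1] assms(2) by simp
qed

section \<open>Lifting a solution to larger tuples\<close>

lemma H0_all_subtuples: "H0 k' (all_subtuples k R)"
  by (rule H0_if_set_determined) (simp add: all_subtuples_def)

lemma all_subtuples_if_H1:
  assumes "H1 Init k R" "\<forall>x\<in>set xs. (g, snd x) \<in> Init"
  shows "all_subtuples k R g xs"
  unfolding all_subtuples_def
proof (intro allI impI)
  fix ys assume "set ys \<subseteq> set xs" "distinct (map fst ys)" "length ys = k"
  then show "R g ys"
    using H1_list[OF assms(1)] assms(2) by blast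
qed

lemma H1_all_subtuples:
  assumes "H1 Init k R"
  shows "H1 Init k' (all_subtuples k R)"
  unfolding H1_def
proof (intro allI impI)
  fix g q l
  assume "\<forall>i\<in>{1..k'}. (g, l i) \<in> Init"
  then show "all_subtuples k R g (tup q l 1 k')"
    by (intro all_subtuples_if_H1[OF assms]) (auto simp: set_tup)
qed

lemma all_subtuples_step_outside:
  assumes h3: "H3 Trans k R" and step: "((g, l), (g', l')) \<in> Trans p"
    and fresh: "p \<notin> fst ` set xs" and old: "all_subtuples k R g ((p, l) # xs)"
  shows "all_subtuples k R g' xs"
  unfolding all_subtuples_def
proof (intro allI impI)
  fix ys assume ys: "set ys \<subseteq> set xs" "distinct (map fst ys)" "length ys = k"
  have "distinct (p # map fst ys)"
    using fresh ys by auto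
  moreover have "all_subtuples k R g ((p, l) # ys)"
    by (rule all_subtuples_subset[OF old]) (use ys(1) in auto)
  ultimately show "R g' ys"
    using H3_list[OF h3 ys(3) _ step] by blast
qed

lemma all_subtuples_step_inside:
  assumes h0: "H0 k R" and h2: "H2 Trans k R" and h3: "H3 Trans k R"
    and step: "((g, l), (g', l')) \<in> Trans p"
    and fresh: "p \<notin> fst ` set xs" and old: "all_subtuples k R g ((p, l) # xs)"
  shows "all_subtuples k R g' ((p, l') # xs)"
  unfolding all_subtuples_def
proof (intro allI impI)
  fix ys assume ys: "set ys \<subseteq> set ((p, l') # xs)" "distinct (map fst ys)" "length ys = k"
  show "R g' ys"
  proof (cases "(p, l') \<in> set ys")
    case True
    define rest where "rest = remove1 (p, l') ys"
    have mset_ys: "mset ys = mset ((p, l') # rest)"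
      using True by (simp add: rest_def)
    have dist: "distinct (p # map fst rest)"
      using mset_eq_imp_distinct_iff[of "map fst ys" "map fst ((p, l') # rest)"] mset_ys ys(2)
      by simp
    have "distinct ys"
      using ys(2) by (simp add: distinct_map)
    then have "set rest \<subseteq> set xs"
      using ys(1) dist by (auto simp: rest_def)
    moreover have len: "Suc (length rest) = k"
      using True length_pos_if_in_set[OF True] ys(3) by (simp add: rest_def length_remove1)
    ultimately have "R g ((p, l) # rest)"
      using old dist unfolding all_subtuples_def by (elim allE[of _ "(p, l) # rest"]) auto
    then have "R g' ((p, l') # rest)"
      by (rule H2_list[OF h2 len dist step])
    then show ?thesis
      using H0_mset_eq[OF h0 _ _ mset_ys] dist len by simp
  next
    case False
    then have "set ys \<subseteq> set xs"
      using ys(1) by auto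
    then show ?thesis
      using all_subtuples_step_outside[OF h3 step fresh old] ys(2,3)
      unfolding all_subtuples_def by blast
  qed
qed

lemma H2_all_subtuples:
  assumes h0: "H0 k R" and h2: "H2 Trans k R" and h3: "H3 Trans k R" and "0 < k'"
  shows "H2 Trans k' (all_subtuples k R)"
  unfolding H2_def
proof (intro allI impI)
  fix g g' q l l'
  assume inj: "inj_on q {1..k'}" and step: "((g, l 1), (g', l')) \<in> Trans (q 1)"
    and old: "all_subtuples k R g (tup q l 1 k')"
  have "tup q (l(1 := l')) 2 k' = tup q l 2 k'"
    by (rule tup_cong) auto
  then have new: "tup q (l(1 := l')) 1 k' = (q 1, l') # tup q l 2 k'"
    using tup_Cons[of 1 k' q "l(1 := l')"] \<open>0 < k'\<close> by (simp add: numeral_2_eq_2)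
  have "all_subtuples k R g ((q 1, l 1) # tup q l 2 k')"
    using old tup_Cons[of 1 k' q l] \<open>0 < k'\<close> by (simp add: numeral_2_eq_2)
  moreover have "q 1 \<notin> fst ` set (tup q l 2 k')"
    using head_notin_fst_set_tup[OF inj] by (simp add: numeral_2_eq_2)
  ultimately show "all_subtuples k R g' (tup q (l(1 := l')) 1 k')"
    unfolding new by (rule all_subtuples_step_inside[OF h0 h2 h3 step, rotated])
qed

lemma H3_all_subtuples:
  assumes h3: "H3 Trans k R" and "k \<le> k'"
  shows "H3 Trans k' (all_subtuples k R)"
  unfolding H3_def
proof (intro allI impI)
  fix g g' q l l'
  assume inj: "inj_on q {0..k'}" and step: "((g, l 0), (g', l')) \<in> Trans (q 0)"
    and conj: "RConj k' (all_subtuples k R) g q l 0 k'"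
  have "all_subtuples k R g ((q 0, l 0) # tup q l 1 k')"
    using all_subtuples_if_RConj[OF conj \<open>k \<le> k'\<close>] by (simp add: tup_Cons)
  then show "all_subtuples k R g' (tup q l 1 k')"
    by (rule all_subtuples_step_outside[OF h3 step head_notin_fst_set_tup[OF inj, folded One_nat_def]])
qed

lemma H4_all_subtuples:
  assumes h4: "H4 errs k R" and "k \<le> k'"
  shows "H4 errs k' (all_subtuples k R)"
  unfolding H4_def Let_def
proof (intro allI impI)
  fix g q l
  let ?r = "max (length errs) k" and ?r' = "max (length errs) k'"
  assume inj: "inj_on q {1..?r'}"
    and err: "\<forall>j\<in>{1..length errs}. q j = fst (errs ! (j - 1)) \<and> (g, l j) \<in> snd (errs ! (j - 1))"
    and conj: "RConj k' (all_subtuples k R) g q l 1 ?r'"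
  have "all_subtuples k R g (tup q l 1 ?r')"
    using all_subtuples_if_RConj[OF conj \<open>k \<le> k'\<close>] by simp
  then have "all_subtuples k R g (tup q l 1 ?r)"
    by (rule all_subtuples_subset) (use \<open>k \<le> k'\<close> in \<open>auto simp: set_tup\<close>)
  moreover have inj': "inj_on q {1..?r}"
    by (rule inj_on_subset[OF inj]) (use \<open>k \<le> k'\<close> in auto)
  ultimately have "RConj k R g q l 1 ?r"
    by (intro RConj_if_all_subtuples)
  then show False
    using h4 inj' err unfolding H4_def Let_def by blast
qed

lemma solvable_mono:
  assumes "solvable Init Trans errs k" "k \<le> k'" "0 < k'"
  shows "solvable Init Trans errs k'"
proof -
  obtain R where "H1 Init k R" "H0 k R" "H2 Trans k R" "H3 Trans k R" "H4 errs k R"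
    using assms(1) unfolding solvable_def by blast
  then show ?thesis
    unfolding solvable_def using assms(2,3)
    by (intro exI[of _ "all_subtuples k R"] conjI H0_all_subtuples H1_all_subtuples
        H2_all_subtuples H3_all_subtuples H4_all_subtuples)
qed

section \<open>A system separating \<open>k\<close> from larger tuple sizes\<close>

definition count_trans :: "nat \<Rightarrow> nat \<Rightarrow> ((nat \<times> nat) \<times> (nat \<times> nat)) set" where
  "count_trans k p = {((g, 1), (Suc g, 2)) | g. p \<le> k}"

definition count_errs :: "nat \<Rightarrow> (nat \<times> (nat \<times> nat) set) list" where
  "count_errs k = map (\<lambda>p. (p, {(1, 1)})) [0..<Suc k]"

definition idle :: "nat \<Rightarrow> (nat \<times> nat) set \<Rightarrow> nat set" where
  "idle k A = {p. p \<le> k \<and> (p, 1) \<in> A}"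

definition count_inv :: "nat \<Rightarrow> nat \<Rightarrow> (nat \<times> nat) list \<Rightarrow> bool" where
  "count_inv k g xs \<longleftrightarrow> g + card (idle k (set xs)) \<le> Suc k"

lemma mem_count_trans [simp]:
  "((g, l), (g', l')) \<in> count_trans k p \<longleftrightarrow> p \<le> k \<and> l = 1 \<and> g' = Suc g \<and> l' = 2"
  by (auto simp: count_trans_def)

lemma count_errs_length [simp]: "length (count_errs k) = Suc k"
  by (simp add: count_errs_def)

lemma count_errs_nth: "j \<in> {1..Suc k} \<Longrightarrow> count_errs k ! (j - 1) = (j - 1, {(1, 1)})"
  unfolding count_errs_def by (auto simp del: upt_Suc)

lemma error_spec_count_errs: "error_spec (count_errs k)"
  unfolding error_spec_def count_errs_def by (simp add: o_def del: upt_Suc)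

lemma idle_subset: "idle k A \<subseteq> {..k}"
  by (auto simp: idle_def)

lemma finite_idle [simp]: "finite (idle k A)"
  using finite_subset[OF idle_subset] by blast

lemma card_idle_le: "card (idle k A) \<le> Suc k"
  using card_mono[OF _ idle_subset] by simp

lemma idle_insert_idle: "p \<le> k \<Longrightarrow> idle k (insert (p, 1) A) = insert p (idle k A)"
  by (auto simp: idle_def)

lemma idle_insert_busy: "l \<noteq> 1 \<Longrightarrow> idle k (insert (p, l) A) = idle k A"
  by (auto simp: idle_def)

lemma notin_idle: "p \<notin> fst ` A \<Longrightarrow> p \<notin> idle k A"
  by (force simp: idle_def)

lemma H1_count_inv:
  assumes "0 < k'"
  shows "H1 {(0, 1)} k' (count_inv k)"
  unfolding H1_def count_inv_def
proof (intro allI impI)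
  fix g :: nat and q and l :: "nat \<Rightarrow> nat"
  assume "\<forall>i\<in>{1..k'}. (g, l i) \<in> {(0, 1)}"
  moreover have "1 \<in> {1..k'}"
    using \<open>0 < k'\<close> by simp
  ultimately have "g = 0"
    by blast
  then show "g + card (idle k (set (tup q l 1 k'))) \<le> Suc k"
    using card_idle_le by simp
qed

lemma H2_count_inv:
  assumes "0 < k'"
  shows "H2 (count_trans k) k' (count_inv k)"
  unfolding H2_def count_inv_def
proof (intro allI impI)
  fix g g' q l l'
  assume inj: "inj_on q {1..k'}" and step: "((g, l 1), (g', l')) \<in> count_trans k (q 1)"
    and old: "g + card (idle k (set (tup q l 1 k'))) \<le> Suc k"
  let ?S = "set (tup q l 2 k')"
  have "tup q (l(1 := l')) 2 k' = tup q l 2 k'"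
    by (rule tup_cong) auto
  then have "set (tup q (l(1 := l')) 1 k') = insert (q 1, 2) ?S"
    using \<open>0 < k'\<close> step by (simp add: tup_Cons numeral_2_eq_2)
  then have "idle k (set (tup q (l(1 := l')) 1 k')) = idle k ?S"
    using idle_insert_busy[of 2 k "q 1" ?S] by simp
  moreover have "set (tup q l 1 k') = insert (q 1, 1) ?S"
    using \<open>0 < k'\<close> step by (simp add: tup_Cons numeral_2_eq_2)
  then have "idle k (set (tup q l 1 k')) = insert (q 1) (idle k ?S)"
    using idle_insert_idle[of "q 1" k ?S] step by simp
  moreover have "q 1 \<notin> idle k ?S"
    using notin_idle[OF head_notin_fst_set_tup[OF inj, of l]] by (simp add: numeral_2_eq_2)
  ultimately show "g' + card (idle k (set (tup q (l(1 := l')) 1 k'))) \<le> Suc k"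
    using old step by simp
qed

lemma H3_count_inv:
  assumes "k < k'"
  shows "H3 (count_trans k) k' (count_inv k)"
  unfolding H3_def
proof (intro allI impI)
  fix g g' q l l'
  assume inj: "inj_on q {0..k'}" and step: "((g, l 0), (g', l')) \<in> count_trans k (q 0)"
    and conj: "RConj k' (count_inv k) g q l 0 k'"
  let ?f = "\<lambda>i. (q i, l i)"
  obtain j where j0: "j \<in> {0..k'}" and busy: "k < q j"
    using inj_on_exists_gt[OF inj, of k] \<open>k < k'\<close> by auto
  moreover have "j \<noteq> 0"
    by (rule notI) (use busy step in simp)
  ultimately have j: "j \<in> {1..k'}" "k < q j"
    by auto
  define T where "T = {0..k'} - {j}"
  have "T \<subseteq> {0..k'}" "card T = k'"
    using j(1) by (auto simp: T_def)
  then have "count_inv k g (map ?f (sorted_list_of_set T))"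
    by (rule RConj_sorted_list_of_set[OF conj])
  then have inv: "g + card (idle k (?f ` T)) \<le> Suc k"
    by (simp add: count_inv_def T_def)
  have "idle k (set (tup q l 1 k')) \<subseteq> idle k (?f ` T)"
  proof
    fix p assume "p \<in> idle k (set (tup q l 1 k'))"
    then obtain i where i: "i \<in> {1..k'}" "?f i = (p, 1)" "p \<le> k"
      by (auto simp: idle_def set_tup)
    then have "i \<in> T"
      using j unfolding T_def by auto
    then show "p \<in> idle k (?f ` T)"
      using i unfolding idle_def by (metis (mono_tags, lifting) image_eqI mem_Collect_eq)
  qed
  moreover have "q 0 \<in> idle k (?f ` T)"
    using j(1) step unfolding idle_def T_def by force
  moreover have "q 0 \<notin> idle k (set (tup q l 1 k'))"
    using notin_idle[OF head_notin_fst_set_tup[OF inj, of l]] by simp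
  ultimately have "Suc (card (idle k (set (tup q l 1 k')))) \<le> card (idle k (?f ` T))"
    using card_mono[OF finite_idle, of "insert (q 0) (idle k (set (tup q l 1 k')))"] by simp
  then show "count_inv k g' (tup q l 1 k')"
    using inv step by (simp add: count_inv_def)
qed

lemma H4_count_inv:
  assumes "k < k'"
  shows "H4 (count_errs k) k' (count_inv k)"
  unfolding H4_def Let_def
proof (intro allI impI)
  fix g q l
  assume err: "\<forall>j\<in>{1..length (count_errs k)}. q j = fst (count_errs k ! (j - 1))
      \<and> (g, l j) \<in> snd (count_errs k ! (j - 1))"
    and conj: "RConj k' (count_inv k) g q l 1 (max (length (count_errs k)) k')"
  then have err': "q j = j - 1 \<and> g = 1 \<and> l j = 1" if "j \<in> {1..Suc k}" for j
    using count_errs_nth[OF that] that by force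
  have "count_inv k g (map (\<lambda>i. (q i, l i)) (sorted_list_of_set {1..k'}))"
    by (rule RConj_sorted_list_of_set[OF conj]) (use \<open>k < k'\<close> in auto)
  then have "g + card (idle k ((\<lambda>i. (q i, l i)) ` {1..k'})) \<le> Suc k"
    by (simp add: count_inv_def)
  moreover have "{..k} \<subseteq> idle k ((\<lambda>i. (q i, l i)) ` {1..k'})"
  proof
    fix p assume "p \<in> {..k}"
    then have "(q (Suc p), l (Suc p)) = (p, 1)" "Suc p \<in> {1..k'}"
      using err'[of "Suc p"] \<open>k < k'\<close> by auto
    then show "p \<in> idle k ((\<lambda>i. (q i, l i)) ` {1..k'})"
      using \<open>p \<in> {..k}\<close> unfolding idle_def by (metis (mono_tags) atMost_iff image_eqI mem_Collect_eq)
  qed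
  then have "Suc k \<le> card (idle k ((\<lambda>i. (q i, l i)) ` {1..k'}))"
    using card_mono[OF finite_idle] by (metis card_atMost)
  ultimately show False
    using err'[of 1] by simp
qed

lemma solvable_count_system:
  assumes "k < k'"
  shows "solvable {(0, 1)} (count_trans k) (count_errs k) k'"
  unfolding solvable_def
proof (intro exI conjI)
  show "H0 k' (count_inv k)"
    by (rule H0_if_set_determined) (simp add: count_inv_def)
qed (use assms H1_count_inv H2_count_inv H3_count_inv H4_count_inv in auto)

lemma not_solvable_count_system: "\<not> solvable {(0, 1)} (count_trans k) (count_errs k) k"
proof
  assume "solvable {(0, 1)} (count_trans k) (count_errs k) k"
  then obtain R where h1: "H1 {(0, 1)} k R" and h3: "H3 (count_trans k) k R"
    and h4: "H4 (count_errs k) k R"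
    unfolding solvable_def by blast
  let ?q = "\<lambda>j::nat. j - 1" and ?l = "\<lambda>_::nat. 1::nat"
  have inj: "inj_on ?q {1..Suc k}"
    by (auto simp: inj_on_def)
  have "all_subtuples k R 1 (tup ?q ?l 1 (Suc k))"
    unfolding all_subtuples_def
  proof (intro allI impI)
    fix zs assume zs: "set zs \<subseteq> set (tup ?q ?l 1 (Suc k))" "distinct (map fst zs)" "length zs = k"
    obtain p where p: "p \<le> k" "p \<notin> fst ` set zs"
    proof -
      have "card (fst ` set zs) \<le> k"
        using zs(3) card_length by (metis image_set length_map)
      then have "\<not> {..k} \<subseteq> fst ` set zs"
        using card_mono[of "fst ` set zs" "{..k}"] by auto
      then show ?thesis
        using that by auto
    qed
    have "\<forall>x\<in>set ((p, 1) # zs). (0, snd x) \<in> {(0, 1)}"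
      using zs(1) by (auto simp: set_tup)
    then have "all_subtuples k R 0 ((p, 1) # zs)"
      by (rule all_subtuples_if_H1[OF h1])
    moreover have "distinct (p # map fst zs)"
      using p zs(2) by simp
    moreover have "((0, 1), (1, 2)) \<in> count_trans k p"
      using p by simp
    ultimately show "R 1 zs"
      using H3_list[OF h3 zs(3)] by blast
  qed
  then have "RConj k R 1 ?q ?l 1 (Suc k)"
    by (rule RConj_if_all_subtuples[OF inj])
  moreover have "\<forall>j\<in>{1..Suc k}. ?q j = fst (count_errs k ! (j - 1)) \<and> (1, ?l j) \<in> snd (count_errs k ! (j - 1))"
    using count_errs_nth by simp
  ultimately show False
    using h4 inj unfolding H4_def Let_def by simp
qed

theorem theorem1:
  shows "(\<forall>(Init :: ('g \<times> 'l) set) Trans errs k k'.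
            error_spec errs \<longrightarrow> 0 < k \<longrightarrow> k < k' \<longrightarrow>
            solvable Init Trans errs k \<longrightarrow> solvable Init Trans errs k') \<and>
         (\<forall>k k'. 0 < k \<longrightarrow> k < k' \<longrightarrow>
            (\<exists>(Init :: (nat \<times> nat) set) Trans errs.
               error_spec errs \<and> solvable Init Trans errs k' \<and> \<not> solvable Init Trans errs k))"
proof (intro conjI allI impI)
  fix Init :: "('g \<times> 'l) set" and Trans errs and k k' :: nat
  assume "error_spec errs" "0 < k" "k < k'" "solvable Init Trans errs k"
  then show "solvable Init Trans errs k'"
    using solvable_mono[of Init Trans errs k k'] by simp
next
  fix k k' :: nat
  assume "k < k'"
  then show "\<exists>(Init :: (nat \<times> nat) set) Trans errs.
      error_spec errs \<and> solvable Init Trans errs k' \<and> \<not> solvable Init Trans errs k"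
    using error_spec_count_errs solvable_count_system not_solvable_count_system by blast
qed

end
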